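(* Let $r \ge 3$ and $n \ge \frac{1}{3} r^4$. Let $\mathcal{H}$ be an intersecting $r$-uniform $n$-vertex hypergraph with $\delta_{r-1}^+(\mathcal{H}) \ge 2$ having the maximum number of hyperedges among all intersecting $r$-uniform $n$-vertex hypergraphs with minimum positive co-degree at least $2$. Then $\mathcal{H}$ is a $2$-kernel system.
   Context: A hypergraph is intersecting if every two of its hyperedges share at least one vertex. For a non-empty $r$-uniform hypergraph $\mathcal{H}$, the minimum positive co-degree $\delta_{r-1}^+(\mathcal{H})$ is the largest integer $k$ such that every $(r-1)$-set of vertices that is contained in at least one hyperedge of $\mathcal{H}$ is contained in at least $k$ distinct hyperedges of $\mathcal{H}$; for the empty hypergraph it is $0$. Given integers $r \ge k \ge 1$, an $r$-uniform $k$-kernel system on vertex set $V$ is a hypergraph whose hyperedge set is $\{E \in \binom{V}{r} : |E \cap X| \ge k\}$ for some set $X \subseteq V$ with $|X| = 2k-1$. *)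

theory Defs
  imports Main
begin

definition uniform_hg :: "nat \<Rightarrow> 'a set \<Rightarrow> 'a set set \<Rightarrow> bool" where
  "uniform_hg r V H \<longleftrightarrow> (\<forall>E\<in>H. E \<subseteq> V \<and> card E = r)"

definition intersecting :: "'a set set \<Rightarrow> bool" where
  "intersecting H \<longleftrightarrow> (\<forall>E\<in>H. \<forall>F\<in>H. E \<inter> F \<noteq> {})"

definition codeg :: "'a set set \<Rightarrow> 'a set \<Rightarrow> nat" where
  "codeg H S = card {E\<in>H. S \<subseteq> E}"

definition min_pos_codeg :: "nat \<Rightarrow> 'a set set \<Rightarrow> nat" where
  "min_pos_codeg r H =
     (if H = {} then 0
      else GREATEST k. \<forall>S. card S = r - 1 \<and> (\<exists>E\<in>H. S \<subseteq> E) \<longrightarrow> k \<le> codeg H S)"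

definition kernel_system :: "nat \<Rightarrow> nat \<Rightarrow> 'a set \<Rightarrow> 'a set set \<Rightarrow> bool" where
  "kernel_system r k V H \<longleftrightarrow>
     (\<exists>X. X \<subseteq> V \<and> card X = 2 * k - 1 \<and>
          H = {E. E \<subseteq> V \<and> card E = r \<and> card (E \<inter> X) \<ge> k})"

end

theory Submission
  imports Defs
begin

text \<open>The 2-kernel system on any 3-set of vertices is intersecting with minimum positive
co-degree 2, so by maximality \<open>H\<close> has at least
\<open>C(n-2, r-2) + 2 C(n-3, r-2)\<close> edges. Co-degree at least 2 means that for every edge \<open>E\<close>
and \<open>v \<in> E\<close> some edge contains \<open>E - {v}\<close> but not \<open>v\<close>. Hence no vertex covers the edges,
and if \<open>{a, b}\<close> covers them, exchanging \<open>a\<close> for \<open>b\<close> in an edge through \<open>a\<close> but not \<open>b\<close>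
gives another edge.

If no pair covers the edges, a fixed edge, an edge avoiding each of its vertices and an edge
avoiding each such pair show that every edge contains one of at most \<open>r^3\<close> triples, so there
are at most \<open>r^3 C(n-3, r-3)\<close> edges. If \<open>{a, b}\<close> covers the edges and for every further
vertex \<open>c\<close> some edge contains \<open>a\<close> but neither \<open>b\<close> nor \<open>c\<close>, the same argument puts every
edge through \<open>a\<close> but not \<open>b\<close> above one of \<open>(r-1)^2\<close> triples through \<open>a\<close>, and exchange
shows there are no more edges through \<open>b\<close> but not \<open>a\<close>; this gives at most
\<open>C(n-2, r-2) + 2 (r-1)^2 C(n-3, r-3)\<close> edges. For \<open>3n \<ge> r^4\<close> both bounds are below the
lower bound. So some \<open>c\<close> lies on every edge through \<open>a\<close> but not \<open>b\<close>; then every edge meets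
\<open>{a, b, c}\<close> twice, and maximality forces equality with the kernel system.\<close>

lemma Suc_times_binomial_Suc: "Suc k * (N choose Suc k) = (N - k) * (N choose k)"
  using times_binomial_minus1_eq[of "Suc k" N] binomial_absorb_comp[of N k] by simp

lemma polynomial_bounds_of_quartic_le:
  fixes r n :: nat assumes r: "r \<ge> 3" and n: "r ^ 4 \<le> 3 * n"
  shows "(r - 2) * r ^ 3 < (r - 2) + 3 * (n - r)" and "(r - 2) * (r - 1) ^ 2 < n - r"
proof -
  \<comment> \<open>With \<open>r = s + 3\<close> both claims become inequalities between polynomials in \<open>s\<close>
    whose difference has nonnegative coefficients.\<close>
  obtain s where s: "r = s + 3" using r by (metis add.commute le_Suc_ex)
  have "(s+3)^4 \<le> 3 * n" using n s by simp
  then have n': "s^4 + 12*s^3 + 54*s^2 + 108*s + 81 \<le> 3 * n"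
    by (simp add: power_numeral_reduce algebra_simps)
  have "(s + 1) * (s + 3) ^ 3 < (s + 1) + 3 * (n - (s + 3))"
    using n' by (simp add: power_numeral_reduce algebra_simps)
  then show "(r - 2) * r ^ 3 < (r - 2) + 3 * (n - r)" using s by simp
  have "(s + 1) * (s + 2) ^ 2 < n - (s + 3)"
    using n' by (simp add: power_numeral_reduce algebra_simps)
  then show "(r - 2) * (r - 1) ^ 2 < n - r" using s by simp
qed

lemma binomial_bounds_of_quartic_le:
  fixes r n :: nat assumes r: "r \<ge> 3" and n: "r ^ 4 \<le> 3 * n"
  shows "r ^ 3 * ((n - 3) choose (r - 3)) < ((n - 2) choose (r - 2)) + 2 * ((n - 3) choose (r - 2))"
    and "(r - 1) ^ 2 * ((n - 3) choose (r - 3)) < (n - 3) choose (r - 2)"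
proof -
  note poly = polynomial_bounds_of_quartic_le[OF r n]
  define c0 where "c0 = (n - 3) choose (r - 3)"
  define c1 where "c1 = (n - 3) choose (r - 2)"
  have "r \<le> n" using poly(2) by linarith
  then have "c0 > 0" unfolding c0_def by simp
  have r2: "r - 2 = Suc (r - 3)" using r by simp
  have ratio: "(r - 2) * c1 = (n - r) * c0"
    unfolding c0_def c1_def r2 Suc_times_binomial_Suc using r by (simp add: diff_diff_eq)
  have "n - 2 = Suc (n - 3)" using \<open>r \<le> n\<close> r by simp
  then have pascal: "(n - 2) choose (r - 2) = c0 + c1"
    unfolding c0_def c1_def r2 by simp
  have "(r - 2) * (r ^ 3 * c0) < (r - 2) * (c0 + 3 * c1)"
    using mult_strict_right_mono[OF poly(1) \<open>c0 > 0\<close>] ratio by (simp add: algebra_simps)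
  then show "r ^ 3 * c0 < ((n - 2) choose (r - 2)) + 2 * c1"
    unfolding pascal by simp
  have "(r - 2) * ((r - 1) ^ 2 * c0) < (r - 2) * c1"
    using mult_strict_right_mono[OF poly(2) \<open>c0 > 0\<close>] ratio by (simp add: algebra_simps)
  then show "(r - 1) ^ 2 * c0 < c1" by simp
qed

lemma card_UN_le_mult:
  assumes "finite A" "card A \<le> k" "\<And>x. x \<in> A \<Longrightarrow> card (F x) \<le> m"
  shows "card (\<Union>x\<in>A. F x) \<le> k * m"
proof -
  have "card (\<Union>x\<in>A. F x) \<le> (\<Sum>x\<in>A. card (F x))" using assms(1) by (rule card_UN_le)
  also have "\<dots> \<le> card A * m" using sum_bounded_above[of A "\<lambda>x. card (F x)" m] assms(3) by simp
  also have "\<dots> \<le> k * m" using assms(2) by simp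
  finally show ?thesis .
qed

lemma two_le_card: "finite A \<Longrightarrow> x \<in> A \<Longrightarrow> y \<in> A \<Longrightarrow> x \<noteq> y \<Longrightarrow> 2 \<le> card A"
  using card_mono[of A "{x, y}"] by simp

definition supersets :: "nat \<Rightarrow> 'a set \<Rightarrow> 'a set \<Rightarrow> 'a set set" where
  "supersets r V T = {E. E \<subseteq> V \<and> card E = r \<and> T \<subseteq> E}"

lemma finite_supersets: "finite V \<Longrightarrow> finite (supersets r V T)"
  unfolding supersets_def by (rule finite_subset[of _ "Pow V"]) auto

lemma card_supersets:
  assumes "finite V" "T \<subseteq> V" "card T \<le> r"
  shows "card (supersets r V T) = (card V - card T) choose (r - card T)"
proof -
  have "finite T" using assms(1,2) finite_subset by blast
  have "bij_betw (\<lambda>D. D \<union> T) {D. D \<subseteq> V - T \<and> card D = r - card T} (supersets r V T)"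
  proof (rule bij_betw_byWitness[where f' = "\<lambda>E. E - T"])
    show "(\<lambda>D. D \<union> T) ` {D. D \<subseteq> V - T \<and> card D = r - card T} \<subseteq> supersets r V T"
    proof clarify
      fix D assume D: "D \<subseteq> V - T" "card D = r - card T"
      have "finite D" using D(1) assms(1) finite_subset by blast
      then have "card (D \<union> T) = card D + card T"
        using D(1) \<open>finite T\<close> by (intro card_Un_disjoint) auto
      then show "D \<union> T \<in> supersets r V T" using D assms unfolding supersets_def by auto
    qed
    show "(\<lambda>E. E - T) ` supersets r V T \<subseteq> {D. D \<subseteq> V - T \<and> card D = r - card T}"
      using \<open>finite T\<close> by (auto simp: supersets_def card_Diff_subset)
  qed (auto simp: supersets_def)
  then have "card (supersets r V T) = card {D. D \<subseteq> V - T \<and> card D = r - card T}"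
    by (simp add: bij_betw_same_card)
  also have "\<dots> = card (V - T) choose (r - card T)" using assms(1) by (simp add: n_subsets)
  finally show ?thesis using \<open>finite T\<close> assms(2) by (simp add: card_Diff_subset)
qed

lemma card_supersets_le:
  assumes "finite V" "T \<subseteq> V"
  shows "card (supersets r V T) \<le> (card V - card T) choose (r - card T)"
proof (cases "card T \<le> r")
  case False
  have "supersets r V T = {}"
  proof (rule ccontr)
    assume "supersets r V T \<noteq> {}"
    then obtain E where "E \<subseteq> V" "card E = r" "T \<subseteq> E" unfolding supersets_def by blast
    then have "card T \<le> r" using assms(1) by (metis card_mono finite_subset)
    then show False using False by simp
  qed
  then show ?thesis by simp
qed (use card_supersets[OF assms] in simp)

lemma card_supersets_three_le:
  assumes "finite V" "{x, y, z} \<subseteq> V" "x \<noteq> y" "x \<noteq> z" "y \<noteq> z"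
  shows "card (supersets r V {x, y, z}) \<le> (card V - 3) choose (r - 3)"
  using card_supersets_le[OF assms(1,2), of r] assms(3-5) by (simp add: numeral_3_eq_3)

lemma finite_uniform_hg: "finite V \<Longrightarrow> uniform_hg r V H \<Longrightarrow> finite H"
  unfolding uniform_hg_def by (rule finite_subset[of _ "Pow V"]) auto

lemma le_min_pos_codeg_iff:
  assumes "finite V" "uniform_hg r V H" "r \<ge> 1" "k \<ge> 1"
  shows "k \<le> min_pos_codeg r H \<longleftrightarrow>
    H \<noteq> {} \<and> (\<forall>E\<in>H. \<forall>S\<subseteq>E. card S = r - 1 \<longrightarrow> k \<le> codeg H S)"
proof (cases "H = {}")
  case False
  let ?P = "\<lambda>k. \<forall>S. card S = r - 1 \<and> (\<exists>E\<in>H. S \<subseteq> E) \<longrightarrow> k \<le> codeg H S"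
  have "finite H" using assms(1,2) by (rule finite_uniform_hg)
  obtain E where E: "E \<in> H" "card E = r" using False assms(2) unfolding uniform_hg_def by blast
  then have "finite E" "E \<noteq> {}" using assms(3) by (auto intro: card_ge_0_finite)
  then obtain v where "v \<in> E" by blast
  have bounded: "j \<le> card H" if "?P j" for j
  proof -
    have "card (E - {v}) = r - 1" using E \<open>finite E\<close> \<open>v \<in> E\<close> by simp
    then have "j \<le> codeg H (E - {v})" using that E by blast
    also have "\<dots> \<le> card H" unfolding codeg_def using \<open>finite H\<close> by (intro card_mono) auto
    finally show ?thesis .
  qed
  have "?P (Greatest ?P)" by (rule GreatestI_nat[of ?P 0 "card H"]) (use bounded in auto)
  then have "k \<le> Greatest ?P \<longleftrightarrow> ?P k"
    using Greatest_le_nat[of ?P k "card H"] bounded le_trans by blast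
  then show ?thesis using False unfolding min_pos_codeg_def by auto
qed (use assms(4) in \<open>simp add: min_pos_codeg_def\<close>)

definition kernel_hg :: "nat \<Rightarrow> nat \<Rightarrow> 'a set \<Rightarrow> 'a set \<Rightarrow> 'a set set" where
  "kernel_hg r k V X = {E. E \<subseteq> V \<and> card E = r \<and> k \<le> card (E \<inter> X)}"

lemma kernel_system_iff:
  "kernel_system r k V H \<longleftrightarrow> (\<exists>X\<subseteq>V. card X = 2 * k - 1 \<and> H = kernel_hg r k V X)"
  unfolding kernel_system_def kernel_hg_def ..

lemma uniform_kernel_hg: "uniform_hg r V (kernel_hg r k V X)"
  unfolding uniform_hg_def kernel_hg_def by auto

lemma intersecting_kernel_hg:
  assumes "finite X" "card X = 2 * k - 1" "k \<ge> 1"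
  shows "intersecting (kernel_hg r k V X)"
  unfolding intersecting_def
proof (intro ballI notI)
  fix E F assume "E \<in> kernel_hg r k V X" "F \<in> kernel_hg r k V X" "E \<inter> F = {}"
  then have "2 * k \<le> card (E \<inter> X) + card (F \<inter> X)" unfolding kernel_hg_def by auto
  also have "\<dots> = card ((E \<inter> X) \<union> (F \<inter> X))"
    using \<open>finite X\<close> \<open>E \<inter> F = {}\<close> by (intro card_Un_disjoint[symmetric]) auto
  also have "\<dots> \<le> card X" using \<open>finite X\<close> by (intro card_mono) auto
  finally show False using assms(2,3) by linarith
qed

lemma kernel_hg_nonempty:
  assumes "finite V" "X \<subseteq> V" "card X = 2 * k - 1" "1 \<le> k" "k \<le> r" "r \<le> card V"
  shows "kernel_hg r k V X \<noteq> {}"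
proof -
  have "k \<le> card X" using assms(3,4) by linarith
  then obtain Y where Y: "Y \<subseteq> X" "card Y = k" "finite Y" by (rule obtain_subset_with_card_n)
  have "card (V - Y) = card V - k" using Y assms(2) by (simp add: card_Diff_subset)
  then have "r - k \<le> card (V - Y)" using assms(6) by linarith
  then obtain D where D: "D \<subseteq> V - Y" "card D = r - k" "finite D" by (rule obtain_subset_with_card_n)
  have "card (Y \<union> D) = r" using Y D assms(5) by (subst card_Un_disjoint) auto
  moreover have "k \<le> card ((Y \<union> D) \<inter> X)"
  proof -
    have "Y \<subseteq> (Y \<union> D) \<inter> X" using Y by auto
    then show ?thesis using Y(2) assms(1,2) finite_subset by (metis card_mono finite_Int)
  qed
  ultimately have "Y \<union> D \<in> kernel_hg r k V X" using Y D assms(2) unfolding kernel_hg_def by auto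
  then show ?thesis by blast
qed

text \<open>Either \<open>S\<close> already meets \<open>X\<close> in \<open>k\<close> vertices, and any vertex outside \<open>S\<close>
extends it, or it meets \<open>X\<close> in exactly \<open>k - 1\<close> and the \<open>k \<ge> 2\<close> vertices of \<open>X - S\<close> do.\<close>

lemma kernel_hg_extending_vertices:
  assumes V: "finite V" "r + 1 \<le> card V" and X: "X \<subseteq> V" "card X = 2 * k - 1" and k: "2 \<le> k" "k \<le> r"
    and E: "E \<in> kernel_hg r k V X" and S: "S \<subseteq> E" "card S = r - 1"
  obtains W where "W \<subseteq> V - S" "2 \<le> card W" "\<And>u. u \<in> W \<Longrightarrow> k \<le> card (insert u S \<inter> X)"
proof -
  have "finite X" using X(1) V(1) finite_subset by blast
  have EV: "E \<subseteq> V" "card E = r" "k \<le> card (E \<inter> X)" using E unfolding kernel_hg_def by auto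
  have "finite E" using EV(1) V(1) by (rule finite_subset)
  then have "finite S" using S(1) by (rule rev_finite_subset)
  have "card (E - S) = 1" using S EV(2) k \<open>finite S\<close> by (simp add: card_Diff_subset)
  then obtain v where "E - S = {v}" by (rule card_1_singletonE)
  then have "E \<inter> X \<subseteq> insert v (S \<inter> X)" by blast
  then have "card (E \<inter> X) \<le> card (insert v (S \<inter> X))" using \<open>finite X\<close> by (intro card_mono) auto
  also have "\<dots> \<le> Suc (card (S \<inter> X))" using \<open>finite X\<close> by (simp add: card_insert_if)
  finally have "k \<le> Suc (card (S \<inter> X))" using EV(3) by linarith
  show thesis
  proof (cases "k \<le> card (S \<inter> X)")
    case True
    have "card (V - S) = card V - (r - 1)" using S EV(1) \<open>finite S\<close> by (simp add: card_Diff_subset)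
    then have "2 \<le> card (V - S)" using V(2) k by linarith
    moreover have "card (S \<inter> X) \<le> card (insert u S \<inter> X)" for u
      using \<open>finite X\<close> by (intro card_mono) auto
    ultimately show thesis using that[of "V - S"] True by (meson le_trans order_refl)
  next
    case False
    then have "card (S \<inter> X) = k - 1" using \<open>k \<le> Suc (card (S \<inter> X))\<close> by linarith
    moreover have "card (X - S) = card X - card (X \<inter> S)" using \<open>finite X\<close> by (simp add: card_Diff_subset_Int)
    ultimately have "card (X - S) = k" using X(2) k by (simp add: Int_commute)
    moreover have "card (insert u S \<inter> X) = k" if "u \<in> X - S" for u
      using that \<open>card (S \<inter> X) = k - 1\<close> \<open>finite X\<close> k by (simp add: Int_insert_left)
    ultimately show thesis using that[of "X - S"] X(1) k by auto
  qed
qed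

lemma two_le_min_pos_codeg_kernel_hg:
  assumes V: "finite V" "r + 1 \<le> card V" and X: "X \<subseteq> V" "card X = 2 * k - 1" and k: "2 \<le> k" "k \<le> r"
  shows "2 \<le> min_pos_codeg r (kernel_hg r k V X)"
proof -
  let ?K = "kernel_hg r k V X"
  have "2 \<le> codeg ?K S" if E: "E \<in> ?K" and S: "S \<subseteq> E" "card S = r - 1" for E S
  proof -
    obtain W where W: "W \<subseteq> V - S" "2 \<le> card W" "\<And>u. u \<in> W \<Longrightarrow> k \<le> card (insert u S \<inter> X)"
      using kernel_hg_extending_vertices[OF V X k E S] by blast
    have "S \<subseteq> V" using S(1) E unfolding kernel_hg_def by blast
    then have "finite S" using V(1) by (rule finite_subset)
    have "(\<lambda>u. insert u S) ` W \<subseteq> {G \<in> ?K. S \<subseteq> G}"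
      using W \<open>finite S\<close> S E k unfolding kernel_hg_def by auto
    then have "card ((\<lambda>u. insert u S) ` W) \<le> codeg ?K S"
      unfolding codeg_def using finite_uniform_hg[OF V(1) uniform_kernel_hg] by (intro card_mono) auto
    moreover have "inj_on (\<lambda>u. insert u S) W" using W(1) by (auto simp: inj_on_def)
    ultimately show ?thesis using W(2) by (simp add: card_image)
  qed
  moreover have "?K \<noteq> {}" using kernel_hg_nonempty[OF V(1) X] k V(2) by simp
  ultimately show ?thesis using k by (subst le_min_pos_codeg_iff[OF V(1) uniform_kernel_hg]) auto
qed

lemma card_kernel_hg_two_ge:
  assumes V: "finite V" and X: "X \<subseteq> V" "card X = 3" and r: "r \<ge> 2"
  shows "((card V - 2) choose (r - 2)) + 2 * ((card V - 3) choose (r - 2)) \<le> card (kernel_hg r 2 V X)"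
proof -
  obtain a b c where abc: "X = {a, b, c}" "a \<noteq> b" "b \<noteq> c" "a \<noteq> c"
    using X(2) unfolding card_3_iff by blast
  define A where "A = supersets r V {a, b}"
  define B where "B = supersets r (V - {b}) {a, c}"
  define C where "C = supersets r (V - {a}) {b, c}"
  have "card A = (card V - 2) choose (r - 2)"
    unfolding A_def using card_supersets[OF V, of "{a, b}" r] abc X(1) r by (simp add: numeral_2_eq_2)
  moreover have "card B = (card V - 3) choose (r - 2)"
    unfolding B_def using card_supersets[of "V - {b}" "{a, c}" r] abc X(1) V r by (simp add: diff_diff_eq numeral_2_eq_2 numeral_3_eq_3)
  moreover have "card C = (card V - 3) choose (r - 2)"
    unfolding C_def using card_supersets[of "V - {a}" "{b, c}" r] abc X(1) V r by (simp add: diff_diff_eq numeral_2_eq_2 numeral_3_eq_3)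
  moreover have "finite A" "finite B" "finite C" unfolding A_def B_def C_def using V by (simp_all add: finite_supersets)
  moreover have "A \<inter> B = {}" "(A \<union> B) \<inter> C = {}" unfolding A_def B_def C_def supersets_def by auto
  ultimately have "card (A \<union> B \<union> C) = ((card V - 2) choose (r - 2)) + 2 * ((card V - 3) choose (r - 2))"
    by (simp add: card_Un_disjoint)
  moreover have "A \<union> B \<union> C \<subseteq> kernel_hg r 2 V X"
  proof
    fix E assume E: "E \<in> A \<union> B \<union> C"
    then obtain p q where "p \<noteq> q" "{p, q} \<subseteq> E \<inter> X"
      unfolding A_def B_def C_def supersets_def using abc by blast
    then have "2 \<le> card (E \<inter> X)" using abc(1) by (intro two_le_card[of _ p q]) auto
    then show "E \<in> kernel_hg r 2 V X" using E unfolding A_def B_def C_def supersets_def kernel_hg_def by auto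
  qed
  then have "card (A \<union> B \<union> C) \<le> card (kernel_hg r 2 V X)"
    using finite_uniform_hg[OF V uniform_kernel_hg] by (rule card_mono[rotated])
  ultimately show ?thesis by simp
qed

locale intersecting_codeg2_hg =
  fixes r :: nat and V :: "'a set" and H :: "'a set set"
  assumes finite_vertices: "finite V" and uniform: "uniform_hg r V H"
    and intersecting: "intersecting H" and min_pos_codeg: "2 \<le> min_pos_codeg r H"
    and rank_pos: "1 \<le> r"
begin

lemma finite_edges: "finite H"
  using finite_vertices uniform by (rule finite_uniform_hg)

lemma edge_subset: "E \<in> H \<Longrightarrow> E \<subseteq> V"
  and card_edge: "E \<in> H \<Longrightarrow> card E = r"
  using uniform unfolding uniform_hg_def by auto

lemma finite_edge: "E \<in> H \<Longrightarrow> finite E"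
  using edge_subset finite_vertices by (rule finite_subset)

lemma edges_meet: "E \<in> H \<Longrightarrow> F \<in> H \<Longrightarrow> E \<inter> F \<noteq> {}"
  using intersecting unfolding intersecting_def by auto

lemma edges_nonempty: "H \<noteq> {}"
  and two_le_codeg: "E \<in> H \<Longrightarrow> S \<subseteq> E \<Longrightarrow> card S = r - 1 \<Longrightarrow> 2 \<le> codeg H S"
  using min_pos_codeg le_min_pos_codeg_iff[OF finite_vertices uniform rank_pos] by auto

lemma exists_edge_avoiding:
  assumes "E \<in> H" "v \<in> E"
  obtains E' where "E' \<in> H" "v \<notin> E'" "E - {v} \<subseteq> E'"
proof -
  have "card (E - {v}) = r - 1" using assms card_edge finite_edge by simp
  then have "2 \<le> card {G \<in> H. E - {v} \<subseteq> G}"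
    using two_le_codeg[OF assms(1)] unfolding codeg_def by blast
  moreover have "E \<in> {G \<in> H. E - {v} \<subseteq> G}" using assms(1) by blast
  ultimately have "{G \<in> H. E - {v} \<subseteq> G} \<noteq> {E}" by force
  with \<open>E \<in> {G \<in> H. E - {v} \<subseteq> G}\<close> obtain E' where E': "E' \<in> H" "E - {v} \<subseteq> E'" "E' \<noteq> E"
    by blast
  have "v \<notin> E'"
  proof
    assume "v \<in> E'"
    then have "E \<subseteq> E'" using E'(2) by blast
    then show False using E' assms(1) card_edge finite_edge by (metis card_subset_eq)
  qed
  then show thesis using that E' by blast
qed

lemma exists_edge_not_containing: "\<exists>E\<in>H. v \<notin> E"
proof -
  obtain E where E: "E \<in> H" using edges_nonempty by blast
  show ?thesis
  proof (cases "v \<in> E")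
    case True
    then show ?thesis using exists_edge_avoiding[OF E] by metis
  qed (use E in blast)
qed

lemma exchange_edge:
  assumes cover: "\<forall>G\<in>H. a \<in> G \<or> b \<in> G" and E: "E \<in> H" "a \<in> E" "b \<notin> E"
  shows "insert b (E - {a}) \<in> H"
proof -
  obtain E' where E': "E' \<in> H" "a \<notin> E'" "E - {a} \<subseteq> E'" using exists_edge_avoiding[OF E(1,2)] .
  then have "insert b (E - {a}) \<subseteq> E'" using cover by blast
  moreover have "card (insert b (E - {a})) = card E'"
    using E E' card_edge finite_edge rank_pos by simp
  ultimately show ?thesis using E'(1) finite_edge by (metis card_subset_eq)
qed

lemma covering_pair_in_vertices:
  assumes "\<forall>G\<in>H. a \<in> G \<or> b \<in> G"
  shows "a \<in> V"
proof -
  obtain E where "E \<in> H" "b \<notin> E" using exists_edge_not_containing by blast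
  then show ?thesis using assms edge_subset by blast
qed

lemma card_le_if_no_covering_pair:
  assumes "\<forall>x y. x \<noteq> y \<longrightarrow> (\<exists>E\<in>H. x \<notin> E \<and> y \<notin> E)"
  shows "card H \<le> r ^ 3 * ((card V - 3) choose (r - 3))"
proof -
  have "\<exists>E\<in>H. x \<notin> E \<and> y \<notin> E" for x y
    using assms exists_edge_not_containing[of x] by (cases "x = y") auto
  then obtain g where g: "\<And>x y. g x y \<in> H" "\<And>x y. x \<notin> g x y" "\<And>x y. y \<notin> g x y" by metis
  obtain E where E: "E \<in> H" using edges_nonempty by blast
  let ?U = "\<Union>x\<in>E. \<Union>y\<in>g x x. \<Union>z\<in>g x y. supersets r V {x, y, z}"
  have "H \<subseteq> ?U"
  proof
    fix G assume G: "G \<in> H"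
    obtain x where x: "x \<in> G" "x \<in> E" using edges_meet[OF G E] by blast
    obtain y where y: "y \<in> G" "y \<in> g x x" using edges_meet[OF G g(1)] by blast
    obtain z where z: "z \<in> G" "z \<in> g x y" using edges_meet[OF G g(1)] by blast
    have "G \<in> supersets r V {x, y, z}"
      using G x y z edge_subset card_edge unfolding supersets_def by simp
    then show "G \<in> ?U" using x y z by blast
  qed
  moreover have "finite ?U" using E g(1) finite_edge finite_vertices by (simp add: finite_supersets)
  moreover have "card ?U \<le> r * (r * (r * ((card V - 3) choose (r - 3))))"
  proof (intro card_UN_le_mult)
    fix x y z assume "x \<in> E" "y \<in> g x x" "z \<in> g x y"
    then show "card (supersets r V {x, y, z}) \<le> (card V - 3) choose (r - 3)"
      using E g edge_subset by (intro card_supersets_three_le[OF finite_vertices]) blast+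
  qed (use E g finite_edge card_edge in auto)
  ultimately have "card H \<le> r * (r * (r * ((card V - 3) choose (r - 3))))"
    by (meson card_mono le_trans)
  then show ?thesis by (simp add: power3_eq_cube mult.assoc)
qed

lemma subset_kernel_hg_if_covering_pair_with_third:
  assumes cover: "\<forall>G\<in>H. a \<in> G \<or> b \<in> G" and third: "\<forall>E\<in>H. a \<in> E \<longrightarrow> b \<notin> E \<longrightarrow> c \<in> E"
    and distinct: "a \<noteq> b" "a \<noteq> c" "b \<noteq> c"
  shows "H \<subseteq> kernel_hg r 2 V {a, b, c}"
proof
  fix E assume E: "E \<in> H"
  have "\<exists>p q. p \<noteq> q \<and> {p, q} \<subseteq> E \<inter> {a, b, c}"
  proof (cases "a \<in> E")
    case True
    then show ?thesis using third E distinct by (cases "b \<in> E") blast+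
  next
    case False
    then have "b \<in> E" using cover E by blast
    then have "insert a (E - {b}) \<in> H" using exchange_edge[of b a E] cover E False by blast
    then have "c \<in> E" using third distinct by blast
    then show ?thesis using \<open>b \<in> E\<close> distinct by blast
  qed
  then obtain p q where "p \<noteq> q" "{p, q} \<subseteq> E \<inter> {a, b, c}" by blast
  then have "2 \<le> card (E \<inter> {a, b, c})" by (intro two_le_card[of _ p q]) auto
  then show "E \<in> kernel_hg r 2 V {a, b, c}"
    using E edge_subset card_edge unfolding kernel_hg_def by blast
qed

lemma card_edges_containing_not_containing_le:
  assumes cover: "\<forall>G\<in>H. a \<in> G \<or> b \<in> G"
    and avoid: "\<forall>c\<in>V - {a, b}. \<exists>E\<in>H. a \<in> E \<and> b \<notin> E \<and> c \<notin> E"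
  shows "card {G \<in> H. a \<in> G \<and> b \<notin> G} \<le> (r - 1) ^ 2 * ((card V - 3) choose (r - 3))"
proof -
  obtain g where g: "\<And>c. c \<in> V - {a, b} \<Longrightarrow> g c \<in> H \<and> a \<in> g c \<and> b \<notin> g c \<and> c \<notin> g c"
    using avoid by metis
  obtain E where E: "E \<in> H" "b \<notin> E" using exists_edge_not_containing by blast
  then have "a \<in> E" using cover by blast
  let ?U = "\<Union>x\<in>E - {a}. \<Union>y\<in>g x - {a}. supersets r V {a, x, y}"
  have "{G \<in> H. a \<in> G \<and> b \<notin> G} \<subseteq> ?U"
  proof clarify
    fix G assume G: "G \<in> H" "a \<in> G" "b \<notin> G"
    obtain x where x: "x \<in> G" "x \<in> insert b (E - {a})"
      using edges_meet[OF G(1) exchange_edge[OF cover E(1) \<open>a \<in> E\<close> E(2)]] by blast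
    then have "x \<in> E - {a}" "x \<in> V - {a, b}" using G(3) edge_subset[OF E(1)] by auto
    note gx = g[OF \<open>x \<in> V - {a, b}\<close>]
    obtain y where y: "y \<in> G" "y \<in> insert b (g x - {a})"
      using edges_meet[OF G(1) exchange_edge[of a b "g x"]] cover gx by blast
    then have "y \<in> g x - {a}" using G(3) by blast
    moreover have "G \<in> supersets r V {a, x, y}"
      using G x y \<open>y \<in> g x - {a}\<close> edge_subset card_edge unfolding supersets_def by simp
    ultimately show "G \<in> ?U" using \<open>x \<in> E - {a}\<close> by blast
  qed
  moreover have "finite ?U"
    using finite_subset[of ?U "Pow V"] finite_vertices unfolding supersets_def by blast
  moreover have "card ?U \<le> (r - 1) * ((r - 1) * ((card V - 3) choose (r - 3)))"
  proof (intro card_UN_le_mult)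
    fix x y assume xy: "x \<in> E - {a}" "y \<in> g x - {a}"
    then have "x \<in> V - {a, b}" using E edge_subset by blast
    then show "card (supersets r V {a, x, y}) \<le> (card V - 3) choose (r - 3)"
      using xy g edge_subset by (intro card_supersets_three_le[OF finite_vertices]) blast+
  next
    fix x assume "x \<in> E - {a}"
    then have "x \<in> V - {a, b}" using E edge_subset by blast
    then show "finite (g x - {a})" "card (g x - {a}) \<le> r - 1" using g finite_edge card_edge by auto
  qed (use E \<open>a \<in> E\<close> finite_edge card_edge in auto)
  ultimately have "card {G \<in> H. a \<in> G \<and> b \<notin> G} \<le> (r - 1) * ((r - 1) * ((card V - 3) choose (r - 3)))"
    by (meson card_mono le_trans)
  then show ?thesis by (simp add: power2_eq_square mult.assoc)
qed

lemma card_le_if_covering_pair: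
  assumes "a \<noteq> b" and cover: "\<forall>G\<in>H. a \<in> G \<or> b \<in> G"
    and avoid: "\<forall>c\<in>V - {a, b}. \<exists>E\<in>H. a \<in> E \<and> b \<notin> E \<and> c \<notin> E"
  shows "card H \<le> ((card V - 2) choose (r - 2)) + 2 * ((r - 1) ^ 2 * ((card V - 3) choose (r - 3)))"
proof -
  define Hab where "Hab = {G \<in> H. a \<in> G \<and> b \<in> G}"
  define Ha where "Ha = {G \<in> H. a \<in> G \<and> b \<notin> G}"
  define Hb where "Hb = {G \<in> H. b \<in> G \<and> a \<notin> G}"
  have "H = Hab \<union> Ha \<union> Hb" using cover unfolding Hab_def Ha_def Hb_def by blast
  then have "card H \<le> card Hab + card Ha + card Hb"
    by (metis card_Un_le add_le_mono1 le_trans)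
  moreover have "card Hab \<le> (card V - 2) choose (r - 2)"
  proof -
    have "{a, b} \<subseteq> V" using covering_pair_in_vertices cover by blast
    then have "card (supersets r V {a, b}) \<le> (card V - 2) choose (r - 2)"
      using card_supersets_le[OF finite_vertices, of "{a, b}" r] \<open>a \<noteq> b\<close> by (simp add: numeral_2_eq_2)
    moreover have "Hab \<subseteq> supersets r V {a, b}"
      unfolding Hab_def supersets_def using edge_subset card_edge by blast
    ultimately show ?thesis using finite_supersets[OF finite_vertices] by (meson card_mono le_trans)
  qed
  moreover have "card Hb \<le> card Ha"
  proof -
    have "Hb \<subseteq> (\<lambda>E. insert b (E - {a})) ` Ha"
    proof
      fix E assume "E \<in> Hb"
      then have E: "E \<in> H" "b \<in> E" "a \<notin> E" unfolding Hb_def by auto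
      then have "insert a (E - {b}) \<in> Ha" using exchange_edge[of b a E] cover \<open>a \<noteq> b\<close> unfolding Ha_def by blast
      moreover have "E = insert b (insert a (E - {b}) - {a})" using E by blast
      ultimately show "E \<in> (\<lambda>E. insert b (E - {a})) ` Ha" by blast
    qed
    moreover have "finite Ha" unfolding Ha_def using finite_edges by simp
    ultimately show ?thesis by (meson card_image_le card_mono finite_imageI le_trans)
  qed
  moreover have "card Ha \<le> (r - 1) ^ 2 * ((card V - 3) choose (r - 3))"
    unfolding Ha_def using card_edges_containing_not_containing_le[OF cover avoid] .
  ultimately show ?thesis by linarith
qed

lemma covering_triple_or_few_edges:
  obtains (kernel) a b c where "{a, b, c} \<subseteq> V" "card {a, b, c} = 3" "H \<subseteq> kernel_hg r 2 V {a, b, c}"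
  | (no_covering_pair) "card H \<le> r ^ 3 * ((card V - 3) choose (r - 3))"
  | (covering_pair) "card H \<le> ((card V - 2) choose (r - 2)) + 2 * ((r - 1) ^ 2 * ((card V - 3) choose (r - 3)))"
proof (cases "\<exists>a b. a \<noteq> b \<and> (\<forall>G\<in>H. a \<in> G \<or> b \<in> G)")
  case False
  then show thesis using no_covering_pair card_le_if_no_covering_pair by blast
next
  case True
  then obtain a b where ab: "a \<noteq> b" and cover: "\<forall>G\<in>H. a \<in> G \<or> b \<in> G" by blast
  show thesis
  proof (cases "\<exists>c\<in>V - {a, b}. \<forall>E\<in>H. a \<in> E \<longrightarrow> b \<notin> E \<longrightarrow> c \<in> E")
    case True
    then obtain c where c: "c \<in> V - {a, b}" and third: "\<forall>E\<in>H. a \<in> E \<longrightarrow> b \<notin> E \<longrightarrow> c \<in> E"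
      by blast
    have "{a, b, c} \<subseteq> V" "card {a, b, c} = 3"
      using covering_pair_in_vertices[OF cover] covering_pair_in_vertices[of b a] cover c ab by auto
    moreover have "H \<subseteq> kernel_hg r 2 V {a, b, c}"
      using subset_kernel_hg_if_covering_pair_with_third[OF cover third] ab c by blast
    ultimately show thesis by (rule kernel)
  next
    case False
    then show thesis using covering_pair card_le_if_covering_pair[OF ab cover] by blast
  qed
qed

end

lemma card_kernel_hg_le_maximal:
  assumes "finite V" "r + 1 \<le> card V" "2 \<le> r" "X \<subseteq> V" "card X = 3"
    and maximal: "\<forall>H'. uniform_hg r V H' \<and> intersecting H' \<and> min_pos_codeg r H' \<ge> 2
              \<longrightarrow> card H' \<le> card H"
  shows "card (kernel_hg r 2 V X) \<le> card H"
proof -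
  have "finite X" using assms(1,4) by (rule finite_subset[rotated])
  then have "intersecting (kernel_hg r 2 V X)" using assms(5) by (intro intersecting_kernel_hg) auto
  moreover have "2 \<le> min_pos_codeg r (kernel_hg r 2 V X)"
    using assms(1-5) by (intro two_le_min_pos_codeg_kernel_hg[where k = 2]) auto
  ultimately show ?thesis using maximal uniform_kernel_hg[of r V 2 X] by simp
qed

theorem proposition6:
  fixes r n :: nat and V :: "'a set" and H :: "'a set set"
  assumes "r \<ge> 3"
    and "3 * n \<ge> r ^ 4"
    and "finite V" and "card V = n"
    and "uniform_hg r V H" and "intersecting H" and "min_pos_codeg r H \<ge> 2"
    and "\<forall>H'. uniform_hg r V H' \<and> intersecting H' \<and> min_pos_codeg r H' \<ge> 2
              \<longrightarrow> card H' \<le> card H"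
  shows "kernel_system r 2 V H"
proof -
  interpret intersecting_codeg2_hg r V H using assms by unfold_locales auto
  have "r + 1 \<le> n" using polynomial_bounds_of_quartic_le(2)[OF assms(1,2)] by linarith
  have maximal: "card (kernel_hg r 2 V X) \<le> card H" if "X \<subseteq> V" "card X = 3" for X
    using card_kernel_hg_le_maximal[OF assms(3) _ _ that assms(8)] \<open>r + 1 \<le> n\<close> assms(1,4) by simp
  have "3 \<le> card V" using \<open>r + 1 \<le> n\<close> assms(1,4) by linarith
  then obtain X where X: "X \<subseteq> V" "card X = 3" by (rule obtain_subset_with_card_n)
  have lower: "((n - 2) choose (r - 2)) + 2 * ((n - 3) choose (r - 2)) \<le> card H"
    using card_kernel_hg_two_ge[OF assms(3) X, of r] maximal[OF X] assms(1,4) by simp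
  note gaps = binomial_bounds_of_quartic_le[OF assms(1,2)]
  show ?thesis
  proof (cases rule: covering_triple_or_few_edges)
    case (kernel a b c)
    then have "H = kernel_hg r 2 V {a, b, c}"
      using card_seteq[OF finite_uniform_hg[OF assms(3) uniform_kernel_hg]] maximal[OF kernel(1,2)] by simp
    then show ?thesis using kernel(1,2) unfolding kernel_system_iff by (intro exI[of _ "{a, b, c}"]) simp
  next
    case no_covering_pair
    with lower gaps(1) show ?thesis unfolding assms(4) by linarith
  next
    case covering_pair
    with lower gaps(2) show ?thesis unfolding assms(4) by linarith
  qed
qed

end
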